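(* Let $\alpha,\beta\in\mathbb{R}$ with $\alpha\ne0$, let $\{c_k\}_{k\ge0}$ be a sequence of nonzero real numbers, and set $q_k(x)=c_k(\alpha x+\beta)^k$. Let $\{\gamma_n\}_{n\ge0}$ be real numbers and let $T:\mathbb{R}[x]\to\mathbb{R}[x]$ be the linear operator with $T[q_n]=\gamma_nq_n$ for all $n\ge0$. Writing $T=\sum_{k\ge0}Q_k(x)D^k$, we have $Q_0=\gamma_0$ and for every $k\ge1$ \[Q_k(x)=\frac{(-1)^k(\alpha x+\beta)^k}{k!\,\alpha^k}\Big(\gamma_0-\sum_{j=1}^k\binom{k}{j}(-1)^{j+1}\gamma_j\Big).\] Consequently each $Q_k$ is either identically zero or of degree exactly $k$, and $T$ is monotone.
   Context: $D=\frac{d}{dx}$. Every linear operator $T:\mathbb{R}[x]\to\mathbb{R}[x]$ can be written uniquely as $T=\sum_{k=0}^\infty Q_k(x)D^k$ with $Q_k\in\mathbb{R}[x]$ (meaning $T[p]=\sum_kQ_kD^k[p]$ for all polynomials $p$). $T$ is monotone if $\deg Q_k\le\deg Q_l$ whenever $k<l$ and $Q_k\not\equiv0$, $Q_l\not\equiv0$. *)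

theory Defs
  imports "HOL-Computational_Algebra.Polynomial"
begin

definition lin_op :: "(real poly \<Rightarrow> real poly) \<Rightarrow> bool" where
  "lin_op T \<longleftrightarrow> (\<forall>p q. T (p + q) = T p + T q) \<and> (\<forall>c p. T (smult c p) = smult c (T p))"

text \<open>T = sum_k Q_k D^k, i.e. T[p] = sum_k Q_k D^k[p] for all p (the sum is finite,
  since D^k p = 0 for k > degree p).\<close>
definition diff_op_rep :: "(real poly \<Rightarrow> real poly) \<Rightarrow> (nat \<Rightarrow> real poly) \<Rightarrow> bool" where
  "diff_op_rep T Q \<longleftrightarrow> (\<forall>p. T p = (\<Sum>k\<le>degree p. Q k * (pderiv ^^ k) p))"

definition monotone_op :: "(real poly \<Rightarrow> real poly) \<Rightarrow> bool" where
  "monotone_op T \<longleftrightarrow> (\<exists>Q. diff_op_rep T Q \<and>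
     (\<forall>k l. k < l \<and> Q k \<noteq> 0 \<and> Q l \<noteq> 0 \<longrightarrow> degree (Q k) \<le> degree (Q l)))"

end

theory Submission imports Defs begin

text \<open>Put \<open>u = \<alpha>x + \<beta>\<close>. Applying \<open>T = \<Sum>\<^sub>k Q\<^sub>k D\<^sup>k\<close> to the eigenvector \<open>u\<^sup>n\<close> gives
  \<open>\<gamma>\<^sub>n u\<^sup>n = \<Sum>\<^sub>k\<^sub>\<le>\<^sub>n Q\<^sub>k n!/(n-k)! \<alpha>\<^sup>k u\<^sup>n\<^sup>-\<^sup>k\<close>, which determines \<open>Q\<^sub>n\<close> from \<open>Q\<^sub>0, \<dots>, Q\<^sub>n\<^sub>-\<^sub>1\<close>.
  By strong induction \<open>Q\<^sub>k = \<Delta>\<^sup>k\<gamma>(0) u\<^sup>k / (k! \<alpha>\<^sup>k)\<close>, where \<open>\<Delta>\<^sup>k\<gamma>(0)\<close> is the \<open>k\<close>-th forward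
  difference of \<open>\<gamma>\<close>: the recursion reduces to Newton's forward difference formula
  \<open>\<gamma>\<^sub>n = \<Sum>\<^sub>k \<binom>n k \<Delta>\<^sup>k\<gamma>(0)\<close>. In particular \<open>Q\<^sub>k\<close> is a multiple of \<open>u\<^sup>k\<close>, whence monotonicity.\<close>

definition forward_difference :: "(nat \<Rightarrow> 'a::comm_ring_1) \<Rightarrow> nat \<Rightarrow> 'a" where
  "forward_difference \<gamma> k = (\<Sum>j\<le>k. (-1) ^ (k + j) * of_nat (k choose j) * \<gamma> j)"

lemma sum_atMost_triangle_swap:
  fixes f :: "nat \<Rightarrow> nat \<Rightarrow> 'a::comm_monoid_add"
  shows "(\<Sum>k\<le>n. \<Sum>j\<le>k. f k j) = (\<Sum>j\<le>n. \<Sum>k=j..n. f k j)"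
proof (induction n)
  case 0
  then show ?case by simp
next
  case (Suc n)
  have "(\<Sum>j\<le>Suc n. \<Sum>k=j..Suc n. f k j) = (\<Sum>j\<le>n. \<Sum>k=j..Suc n. f k j) + f (Suc n) (Suc n)"
    by simp
  also have "(\<Sum>j\<le>n. \<Sum>k=j..Suc n. f k j) = (\<Sum>j\<le>n. (\<Sum>k=j..n. f k j) + f (Suc n) j)"
    by (intro sum.cong refl) (simp add: add.commute)
  finally show ?case
    using Suc by (simp add: sum.distrib)
qed

lemma sum_alternating_choose_mult_choose:
  assumes "j \<le> n"
  shows "(\<Sum>k=j..n. (-1) ^ (k + j) * of_nat (n choose k) * of_nat (k choose j) :: 'a::comm_ring_1)
       = (if j = n then 1 else 0)"
proof -
  have "(\<Sum>k=j..n. (-1) ^ (k + j) * of_nat (n choose k) * of_nat (k choose j) :: 'a)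
      = (\<Sum>k=j..n. of_nat (n choose j) * ((-1) ^ (k - j) * of_nat ((n - j) choose (k - j))))"
  proof (rule sum.cong[OF refl])
    fix k assume "k \<in> {j..n}"
    then have "j \<le> k" "k \<le> n" by simp_all
    have sign: "(-1) ^ (k + j) = ((-1) ^ (k - j) :: 'a)"
    proof -
      have "k + j = (k - j) + 2 * j" using \<open>j \<le> k\<close> by simp
      then show ?thesis by (simp only: power_add power_mult) simp
    qed
    have "(-1) ^ (k + j) * of_nat (n choose k) * of_nat (k choose j)
        = ((-1) ^ (k - j) * (of_nat ((n choose k) * (k choose j))) :: 'a)"
      by (simp only: sign mult.assoc of_nat_mult)
    also have "\<dots> = (-1) ^ (k - j) * of_nat ((n choose j) * ((n - j) choose (k - j)))"
      by (simp only: choose_mult[OF \<open>j \<le> k\<close> \<open>k \<le> n\<close>])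
    also have "\<dots> = of_nat (n choose j) * ((-1) ^ (k - j) * of_nat ((n - j) choose (k - j)))"
      by (simp add: mult_ac)
    finally show "(-1) ^ (k + j) * of_nat (n choose k) * of_nat (k choose j)
             = (of_nat (n choose j) * ((-1) ^ (k - j) * of_nat ((n - j) choose (k - j))) :: 'a)" .
  qed
  also have "\<dots> = of_nat (n choose j) * (\<Sum>i=0..n-j. (-1) ^ i * of_nat ((n - j) choose i))"
    using sum.shift_bounds_cl_nat_ivl[of "\<lambda>k. (-1) ^ (k - j) * of_nat ((n - j) choose (k - j)) :: 'a" 0 j "n - j"]
      assms by (simp flip: sum_distrib_left)
  also have "\<dots> = (if j = n then 1 else 0)"
    using choose_alternating_sum[of "n - j", where 'a='a] assms by (auto simp: atLeast0AtMost)
  finally show ?thesis .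
qed

lemma newton_forward_difference:
  "(\<Sum>k\<le>n. of_nat (n choose k) * forward_difference \<gamma> k) = \<gamma> n"
proof -
  have "(\<Sum>k\<le>n. of_nat (n choose k) * forward_difference \<gamma> k)
     = (\<Sum>k\<le>n. \<Sum>j\<le>k. ((-1) ^ (k + j) * of_nat (n choose k) * of_nat (k choose j)) * \<gamma> j)"
    by (simp add: forward_difference_def sum_distrib_left mult_ac)
  also have "\<dots> = (\<Sum>j\<le>n. \<Sum>k=j..n. ((-1) ^ (k + j) * of_nat (n choose k) * of_nat (k choose j)) * \<gamma> j)"
    by (rule sum_atMost_triangle_swap)
  also have "\<dots> = (\<Sum>j\<le>n. if j = n then \<gamma> j else 0)"
    by (intro sum.cong refl) (simp add: sum_distrib_right[symmetric] sum_alternating_choose_mult_choose)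
  finally show ?thesis by simp
qed

lemma forward_difference_eq:
  "forward_difference \<gamma> k
     = (-1) ^ k * (\<gamma> 0 - (\<Sum>j=1..k. of_nat (k choose j) * (-1) ^ (j + 1) * \<gamma> j))"
proof -
  have "forward_difference \<gamma> k = (-1) ^ k * \<gamma> 0 + (\<Sum>j=1..k. (-1) ^ (k + j) * of_nat (k choose j) * \<gamma> j)"
    unfolding forward_difference_def by (simp add: atMost_atLeast0 sum.atLeast_Suc_atMost)
  also have "\<dots> = (-1) ^ k * (\<gamma> 0 - (\<Sum>j=1..k. of_nat (k choose j) * (-1) ^ (j + 1) * \<gamma> j))"
    by (simp add: algebra_simps sum_distrib_left power_add sum_negf)
  finally show ?thesis .
qed

lemma higher_pderiv_linear_power:
  fixes a b :: "'a::field_char_0"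
  assumes "k \<le> n"
  shows "(pderiv ^^ k) ([:b, a:] ^ n) = smult (fact n / fact (n - k) * a ^ k) ([:b, a:] ^ (n - k))"
  using assms
proof (induction k)
  case 0
  then show ?case by simp
next
  case (Suc k)
  then obtain m where m: "n - k = Suc m" by (metis Suc_diff_le diff_Suc_Suc)
  have pderiv_power: "pderiv ([:b, a:] ^ Suc m) = smult (of_nat (Suc m) * a) ([:b, a:] ^ m)"
    unfolding pderiv_power_Suc by (simp add: pderiv_pCons mult.commute)
  have "(pderiv ^^ Suc k) ([:b, a:] ^ n) = pderiv (smult (fact n / fact (n - k) * a ^ k) ([:b, a:] ^ Suc m))"
    using Suc m by simp
  also have "\<dots> = smult (fact n / fact (Suc m) * a ^ k * (of_nat (Suc m) * a)) ([:b, a:] ^ m)"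
    by (simp only: m pderiv_smult pderiv_power smult_smult)
  also have "fact n / fact (Suc m) * a ^ k * (of_nat (Suc m) * a) = fact n / fact m * a ^ Suc k"
    by (simp add: field_simps del: of_nat_Suc)
  moreover have "n - Suc k = m"
    using m by simp
  ultimately show ?case
    by simp
qed

lemma smult_linear_power_mult_higher_pderiv:
  fixes a b :: "'a::field_char_0"
  assumes "a \<noteq> 0" and "k \<le> n"
  shows "smult (d / (fact k * a ^ k)) ([:b, a:] ^ k) * (pderiv ^^ k) ([:b, a:] ^ n)
       = smult (of_nat (n choose k) * d) ([:b, a:] ^ n)"
proof -
  have "d / (fact k * a ^ k) * (fact n / fact (n - k) * a ^ k) = of_nat (n choose k) * d"
    using binomial_fact[OF assms(2), where 'a='a] assms(1) by (simp add: field_simps)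
  moreover have "[:b, a:] ^ k * [:b, a:] ^ (n - k) = [:b, a:] ^ n"
    using assms(2) by (simp flip: power_add)
  ultimately show ?thesis
    using assms(2) by (simp add: higher_pderiv_linear_power mult_ac)
qed

lemma lin_op_eigen_cancel:
  assumes "lin_op T" and "c \<noteq> 0" and "T (smult c p) = smult \<gamma> (smult c p)"
  shows "T p = smult \<gamma> p"
proof -
  have "smult c (T p) = smult c (smult \<gamma> p)"
    using assms(1,3) unfolding lin_op_def by (simp add: mult.commute)
  then show ?thesis
    using assms(2) by (rule smult_cancel[rotated])
qed

lemma diff_op_rep_eigen_linear_power:
  fixes \<alpha> \<beta> :: real and \<gamma> :: "nat \<Rightarrow> real"
  assumes "\<alpha> \<noteq> 0"
    and "diff_op_rep T Q"
    and eigen: "\<And>n. T ([:\<beta>, \<alpha>:] ^ n) = smult (\<gamma> n) ([:\<beta>, \<alpha>:] ^ n)"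
  shows "Q n = smult (forward_difference \<gamma> n / (fact n * \<alpha> ^ n)) ([:\<beta>, \<alpha>:] ^ n)"
proof (induction n rule: less_induct)
  case (less n)
  define u where "u = [:\<beta>, \<alpha>:]"
  have "degree (u ^ n) = n"
    using assms(1) by (simp add: u_def degree_power_eq)
  then have "smult (\<gamma> n) (u ^ n) = (\<Sum>k\<le>n. Q k * (pderiv ^^ k) (u ^ n))"
    using assms(2) eigen[of n] unfolding diff_op_rep_def u_def by metis
  also have "\<dots> = (\<Sum>k<n. Q k * (pderiv ^^ k) (u ^ n)) + Q n * (pderiv ^^ n) (u ^ n)"
    by (simp flip: lessThan_Suc_atMost)
  also have "(\<Sum>k<n. Q k * (pderiv ^^ k) (u ^ n))
           = (\<Sum>k<n. smult (of_nat (n choose k) * forward_difference \<gamma> k) (u ^ n))"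
  proof (intro sum.cong refl)
    fix k assume "k \<in> {..<n}"
    then have "Q k = smult (forward_difference \<gamma> k / (fact k * \<alpha> ^ k)) (u ^ k)" and "k \<le> n"
      using less.IH by (simp_all add: u_def)
    then show "Q k * (pderiv ^^ k) (u ^ n) = smult (of_nat (n choose k) * forward_difference \<gamma> k) (u ^ n)"
      unfolding u_def using smult_linear_power_mult_higher_pderiv[OF assms(1)] by simp
  qed
  also have "Q n * (pderiv ^^ n) (u ^ n) = smult (fact n * \<alpha> ^ n) (Q n)"
    by (simp add: u_def higher_pderiv_linear_power)
  finally have "smult (\<gamma> n) (u ^ n)
      = smult (\<Sum>k<n. of_nat (n choose k) * forward_difference \<gamma> k) (u ^ n) + smult (fact n * \<alpha> ^ n) (Q n)"
    by (simp add: smult_sum)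
  moreover have "\<gamma> n = (\<Sum>k<n. of_nat (n choose k) * forward_difference \<gamma> k) + forward_difference \<gamma> n"
    using newton_forward_difference[of n \<gamma>] by (simp flip: lessThan_Suc_atMost)
  ultimately have "smult (forward_difference \<gamma> n) (u ^ n) = smult (fact n * \<alpha> ^ n) (Q n)"
    by (simp add: smult_add_left)
  moreover have "fact n * \<alpha> ^ n \<noteq> 0"
    using assms(1) by simp
  ultimately have "smult (forward_difference \<gamma> n / (fact n * \<alpha> ^ n)) (u ^ n) = Q n"
    using smult_eq_iff by blast
  then show ?case
    by (simp add: u_def)
qed

lemma monotone_op_if_degree_eq_index:
  assumes "diff_op_rep T Q" and "\<And>k. Q k = 0 \<or> degree (Q k) = k"
  shows "monotone_op T"
proof -
  have "degree (Q k) \<le> degree (Q l)" if "k < l" "Q k \<noteq> 0" "Q l \<noteq> 0" for k l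
    using assms(2)[of k] assms(2)[of l] that by simp
  then show ?thesis
    unfolding monotone_op_def using assms(1) by blast
qed

theorem mainTheorem7:
  fixes \<alpha> \<beta> :: real and c \<gamma> :: "nat \<Rightarrow> real"
    and T :: "real poly \<Rightarrow> real poly" and Q :: "nat \<Rightarrow> real poly"
  assumes "\<alpha> \<noteq> 0"
    and "\<forall>k. c k \<noteq> 0"
    and "lin_op T"
    and "\<forall>n. T (smult (c n) ([:\<beta>, \<alpha>:] ^ n)) = smult (\<gamma> n) (smult (c n) ([:\<beta>, \<alpha>:] ^ n))"
    and "diff_op_rep T Q"
  shows "Q 0 = [:\<gamma> 0:]
    \<and> (\<forall>k\<ge>1. Q k = smult ((-1) ^ k / (fact k * \<alpha> ^ k)
          * (\<gamma> 0 - (\<Sum>j=1..k. real (k choose j) * (-1) ^ (j + 1) * \<gamma> j)))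
          ([:\<beta>, \<alpha>:] ^ k))
    \<and> (\<forall>k. Q k = 0 \<or> degree (Q k) = k)
    \<and> monotone_op T"
proof -
  have eigen: "T ([:\<beta>, \<alpha>:] ^ n) = smult (\<gamma> n) ([:\<beta>, \<alpha>:] ^ n)" for n
    by (rule lin_op_eigen_cancel[OF assms(3)]) (use assms(2,4) in auto)
  have Q: "Q k = smult (forward_difference \<gamma> k / (fact k * \<alpha> ^ k)) ([:\<beta>, \<alpha>:] ^ k)" for k
    by (rule diff_op_rep_eigen_linear_power[OF assms(1,5) eigen])
  have degree_Q: "Q k = 0 \<or> degree (Q k) = k" for k
    using assms(1) by (simp add: Q degree_power_eq)
  show ?thesis
  proof (intro conjI allI impI)
    show "Q 0 = [:\<gamma> 0:]"
      by (simp add: Q forward_difference_def)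
    fix k
    show "Q k = smult ((-1) ^ k / (fact k * \<alpha> ^ k)
          * (\<gamma> 0 - (\<Sum>j=1..k. real (k choose j) * (-1) ^ (j + 1) * \<gamma> j)))
          ([:\<beta>, \<alpha>:] ^ k)"
      by (simp add: Q forward_difference_eq)
    show "Q k = 0 \<or> degree (Q k) = k"
      by (rule degree_Q)
  next
    show "monotone_op T"
      by (rule monotone_op_if_degree_eq_index[OF assms(5) degree_Q])
  qed
qed

end
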